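(* Let $n_u<n$, $n_b=n-n_u$, $\mathbf{A}\in\mathbb{R}^{n_u\times n_b}$ and $\mathbf{S}=\begin{bmatrix}\mathbf{A}\\ \mathbf{I}_{n_b}\end{bmatrix}\in\mathbb{R}^{n\times n_b}$. For $j=1,\dots,p$ ($p\ge2$) let $\mathbf{L}_j\in\{0,1\}^{n_j\times n}$ be selection matrices (rows are distinct rows of $\mathbf{I}_n$) such that every variable is selected by at least one $\mathbf{L}_j$; let $m=\sum_j n_j$ and $\mathbf{K}=[\mathbf{L}_1^\top\cdots\mathbf{L}_p^\top]^\top\in\{0,1\}^{m\times n}$. Suppose the base forecasts satisfy $\widehat{\mathbf{y}}=\mathbf{K}\mathbf{S}\mathbf{b}+\boldsymbol{\varepsilon}$, with $\mathbf{y}=\mathbf{S}\mathbf{b}$ the target vector, $\boldsymbol{\varepsilon}$ zero-mean with positive definite covariance $\mathbf{W}\in\mathbb{R}^{m\times m}$ (so the base forecasts are unbiased, $E(\widehat{\mathbf{y}})=\mathbf{K}E(\mathbf{y})$). Let $\mathbf{W}_c=(\mathbf{K}^\top\mathbf{W}^{-1}\mathbf{K})^{-1}$. Consider coherent linear combined forecasts of the form $\mathbf{S}\mathbf{G}\widehat{\mathbf{y}}$, $\mathbf{G}\in\mathbb{R}^{n_b\times m}$, subject to the unbiasedness constraint $\mathbf{G}\mathbf{K}\mathbf{S}=\mathbf{I}_{n_b}$, with error covariance $\mathbf{S}\mathbf{G}\mathbf{W}\mathbf{G}^\top\mathbf{S}^\top$. Then the MMSE coherent linear forecast combination, i.e.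 the one minimizing $\mathrm{tr}(\mathbf{S}\mathbf{G}\mathbf{W}\mathbf{G}^\top\mathbf{S}^\top)$ subject to $\mathbf{G}\mathbf{K}\mathbf{S}=\mathbf{I}_{n_b}$, is $$\widetilde{\mathbf{y}}^c=\mathbf{S}\mathbf{G}\widehat{\mathbf{y}},\qquad \mathbf{G}=(\mathbf{S}^\top\mathbf{W}_c^{-1}\mathbf{S})^{-1}\mathbf{S}^\top\mathbf{K}^\top\mathbf{W}^{-1}.$$
   Context: Structural representation of a linearly constrained multiple time series: $\mathbf{y}=[\mathbf{u}^\top\;\mathbf{b}^\top]^\top$ with upper (constrained) variables $\mathbf{u}=\mathbf{A}\mathbf{b}\in\mathbb{R}^{n_u}$ and free bottom variables $\mathbf{b}\in\mathbb{R}^{n_b}$, so that $\mathbf{y}=\mathbf{S}\mathbf{b}$. Expert $j$ provides forecasts $\widehat{\mathbf{y}}^j$ of $\mathbf{L}_j\mathbf{y}$, stacked into $\widehat{\mathbf{y}}=[\widehat{\mathbf{y}}^{1\top}\cdots\widehat{\mathbf{y}}^{p\top}]^\top$. *)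

theory Defs
  imports "Jordan_Normal_Form.Matrix"
begin

definition mtrace :: "real mat \<Rightarrow> real" where
  "mtrace M = (\<Sum>i<dim_row M. M $$ (i, i))"

definition minv :: "real mat \<Rightarrow> real mat" where
  "minv M = (SOME B. B \<in> carrier_mat (dim_row M) (dim_row M) \<and>
                      M * B = 1\<^sub>m (dim_row M) \<and> B * M = 1\<^sub>m (dim_row M))"

definition pos_def_mat :: "nat \<Rightarrow> real mat \<Rightarrow> bool" where
  "pos_def_mat n W \<longleftrightarrow> W \<in> carrier_mat n n \<and> transpose_mat W = W \<and>
     (\<forall>x \<in> carrier_vec n. x \<noteq> 0\<^sub>v n \<longrightarrow> x \<bullet> (W *\<^sub>v x) > 0)"

definition struct_mat :: "nat \<Rightarrow> nat \<Rightarrow> real mat \<Rightarrow> real mat" where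
  "struct_mat nu nb A = A @\<^sub>r 1\<^sub>m nb"

definition selection_mat :: "nat \<Rightarrow> nat \<Rightarrow> real mat \<Rightarrow> bool" where
  "selection_mat nj n L \<longleftrightarrow> L \<in> carrier_mat nj n \<and>
     (\<exists>f. inj_on f {..<nj} \<and> f ` {..<nj} \<subseteq> {..<n} \<and>
          (\<forall>i<nj. \<forall>k<n. L $$ (i, k) = (if k = f i then 1 else 0)))"

fun stack_mats :: "nat \<Rightarrow> real mat list \<Rightarrow> real mat" where
  "stack_mats n [] = 0\<^sub>m 0 n"
| "stack_mats n (L # Ls) = L @\<^sub>r stack_mats n Ls"

definition mse_trace :: "real mat \<Rightarrow> real mat \<Rightarrow> real mat \<Rightarrow> real" where
  "mse_trace S W G = mtrace (S * G * W * transpose_mat G * transpose_mat S)"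

end

theory Submission
  imports Defs "Jordan_Normal_Form.Determinant"
begin

(* Aitken's generalized least squares argument. Put B = K S; it has trivial kernel because S
   contains an identity block and every variable is selected by some expert, and
   W_c^-1 = K^T W^-1 K, so G0 = (B^T W^-1 B)^-1 B^T W^-1. This G0 is a left inverse of B, and
   for every other left inverse G the difference D = G - G0 satisfies G0 W D^T = 0. Hence
   S G W G^T S^T = S G0 W G0^T S^T + (S D) W (S D)^T, and the trace of the last summand is
   nonnegative and vanishes only if S D = 0, i.e. D = 0. *)

subsection \<open>Matrices with trivial kernel\<close>

definition inj_mat :: "'a :: semiring_0 mat \<Rightarrow> bool" where
  "inj_mat B \<longleftrightarrow>
     (\<forall>x \<in> carrier_vec (dim_col B). B *\<^sub>v x = 0\<^sub>v (dim_row B) \<longrightarrow> x = 0\<^sub>v (dim_col B))"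

lemma inj_matD:
  assumes "inj_mat B" and "B \<in> carrier_mat m k"
    and "x \<in> carrier_vec k" and "B *\<^sub>v x = 0\<^sub>v m"
  shows "x = 0\<^sub>v k"
  using assms unfolding inj_mat_def by auto

lemma inj_matI:
  assumes "B \<in> carrier_mat m k"
    and "\<And>x. x \<in> carrier_vec k \<Longrightarrow> B *\<^sub>v x = 0\<^sub>v m \<Longrightarrow> x = 0\<^sub>v k"
  shows "inj_mat B"
  using assms unfolding inj_mat_def by auto

lemma inj_mat_mult:
  assumes A: "A \<in> carrier_mat m n" and B: "B \<in> carrier_mat n k"
    and "inj_mat A" and "inj_mat B"
  shows "inj_mat (A * B)"
proof (rule inj_matI)
  fix x assume x: "x \<in> carrier_vec k" and "(A * B) *\<^sub>v x = 0\<^sub>v m"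
  then have "A *\<^sub>v (B *\<^sub>v x) = 0\<^sub>v m" using A B by simp
  then have "B *\<^sub>v x = 0\<^sub>v n" using inj_matD[OF \<open>inj_mat A\<close> A] B x by simp
  then show "x = 0\<^sub>v k" using inj_matD[OF \<open>inj_mat B\<close> B x] by simp
qed (use A B in auto)

lemma inj_mat_mult_eq_0:
  assumes S: "S \<in> carrier_mat n k" and "inj_mat S" and D: "D \<in> carrier_mat k m"
    and SD: "S * D = 0\<^sub>m n m"
  shows "D = 0\<^sub>m k m"
proof (rule eq_matI)
  fix i j assume ij: "i < dim_row (0\<^sub>m k m :: 'a mat)" "j < dim_col (0\<^sub>m k m :: 'a mat)"
  have "S *\<^sub>v col D j = col (S * D) j" using S D ij by (simp add: mult_mat_vec_def)
  also have "\<dots> = 0\<^sub>v n" using SD S ij by simp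
  finally have "col D j = 0\<^sub>v k"
    using inj_matD[OF \<open>inj_mat S\<close> S, of "col D j"] D ij by simp
  moreover have "D $$ (i, j) = col D j $ i" using ij D by simp
  ultimately show "D $$ (i, j) = 0\<^sub>m k m $$ (i, j)" using ij by simp
qed (use D in auto)

lemma mult_mat_assoc:
  "dim_col A = dim_row B \<Longrightarrow> dim_col B = dim_row C \<Longrightarrow>
   (A * B) * C = A * (B * (C :: 'a :: semiring_0 mat))"
  by (rule assoc_mult_mat[of A "dim_row A" "dim_col A" B "dim_col B" C "dim_col C"]) auto

lemma minv_eqI:
  assumes M: "M \<in> carrier_mat n n" and B: "B \<in> carrier_mat n n"
    and MB: "M * B = 1\<^sub>m n" and BM: "B * M = 1\<^sub>m n"
  shows "minv M = B"
proof -
  have "\<exists>B. B \<in> carrier_mat n n \<and> M * B = 1\<^sub>m n \<and> B * M = 1\<^sub>m n"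
    using B MB BM by blast
  then have C: "minv M \<in> carrier_mat n n" "M * minv M = 1\<^sub>m n"
    using someI_ex[where P = "\<lambda>B. B \<in> carrier_mat n n \<and> M * B = 1\<^sub>m n \<and> B * M = 1\<^sub>m n"] M
    unfolding minv_def by auto
  have "B = B * (M * minv M)" using B C by simp
  also have "\<dots> = (B * M) * minv M" using B M C by (simp only: assoc_mult_mat)
  also have "\<dots> = minv M" using BM C by simp
  finally show ?thesis by simp
qed

lemma inj_mat_minv:
  assumes M: "M \<in> carrier_mat n n" and "inj_mat (M :: real mat)"
  shows "minv M \<in> carrier_mat n n" "M * minv M = 1\<^sub>m n" "minv M * M = 1\<^sub>m n"
proof -
  have "det M \<noteq> 0"
  proof
    assume "det M = 0"
    then obtain v where "v \<in> carrier_vec n" "v \<noteq> 0\<^sub>v n" "M *\<^sub>v v = 0\<^sub>v n"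
      using det_0_iff_vec_prod_zero[OF M] by auto
    then show False using inj_matD[OF \<open>inj_mat M\<close> M] by simp
  qed
  then obtain B where B: "B \<in> carrier_mat n n" "M * B = 1\<^sub>m n" "B * M = 1\<^sub>m n"
    using det_non_zero_imp_unit[OF M] unfolding Units_def ring_mat_def by auto
  then show "minv M \<in> carrier_mat n n" "M * minv M = 1\<^sub>m n" "minv M * M = 1\<^sub>m n"
    using minv_eqI[OF M B] by simp_all
qed

subsection \<open>Positive definite matrices\<close>

lemma pos_def_matD:
  assumes "pos_def_mat n W"
  shows "W \<in> carrier_mat n n" "transpose_mat W = W"
    "x \<in> carrier_vec n \<Longrightarrow> x \<noteq> 0\<^sub>v n \<Longrightarrow> x \<bullet> (W *\<^sub>v x) > 0"
  using assms unfolding pos_def_mat_def by auto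

lemma pos_def_mat_quadratic_nonneg:
  assumes "pos_def_mat n W" and "x \<in> carrier_vec n"
  shows "x \<bullet> (W *\<^sub>v x) \<ge> 0"
proof (cases "x = 0\<^sub>v n")
  case False
  then show ?thesis using pos_def_matD(3)[OF assms] by (simp add: less_imp_le)
qed (use pos_def_matD(1)[OF assms(1)] in simp)

lemma pos_def_mat_inj:
  assumes "pos_def_mat n W"
  shows "inj_mat W"
proof (rule inj_matI[OF pos_def_matD(1)[OF assms]])
  fix x assume x: "x \<in> carrier_vec n" and "W *\<^sub>v x = 0\<^sub>v n"
  then have "x \<bullet> (W *\<^sub>v x) = 0" by simp
  then show "x = 0\<^sub>v n" using pos_def_matD(3)[OF assms x] by fastforce
qed

lemma pos_def_mat_minv:
  assumes "pos_def_mat n W"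
  shows "minv W \<in> carrier_mat n n" "W * minv W = 1\<^sub>m n" "minv W * W = 1\<^sub>m n"
  by (rule inj_mat_minv[OF pos_def_matD(1)[OF assms] pos_def_mat_inj[OF assms]])+

lemma pos_def_mat_congruence:
  assumes pd: "pos_def_mat m W" and B: "B \<in> carrier_mat m k" and "inj_mat B"
  shows "pos_def_mat k (transpose_mat B * W * B)"
proof -
  note W = pos_def_matD(1,2)[OF pd]
  have "transpose_mat (transpose_mat B * W) = W * B"
    using transpose_mult[of "transpose_mat B" k m W m] B W by simp
  moreover have "transpose_mat (transpose_mat B * W * B) = transpose_mat B * transpose_mat (transpose_mat B * W)"
    by (rule transpose_mult[of _ k m]) (use B W in auto)
  ultimately have "transpose_mat (transpose_mat B * W * B) = transpose_mat B * W * B"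
    using B W by simp
  moreover have "x \<bullet> ((transpose_mat B * W * B) *\<^sub>v x) > 0"
    if x: "x \<in> carrier_vec k" "x \<noteq> 0\<^sub>v k" for x
  proof -
    have Bx: "B *\<^sub>v x \<noteq> 0\<^sub>v m" using inj_matD[OF \<open>inj_mat B\<close> B] x by blast
    have "x \<bullet> ((transpose_mat B * W * B) *\<^sub>v x) = x \<bullet> (transpose_mat B *\<^sub>v (W *\<^sub>v (B *\<^sub>v x)))"
      using assoc_mult_mat_vec[of "transpose_mat B" k m "W * B" k x] assoc_mult_mat_vec[OF W(1) B x(1)] B W x
      by simp
    also have "\<dots> = (B *\<^sub>v x) \<bullet> (W *\<^sub>v (B *\<^sub>v x))"
      using B W x transpose_vec_mult_scalar[OF B x(1), of "W *\<^sub>v (B *\<^sub>v x)"]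
        comm_scalar_prod[of x k] comm_scalar_prod[of "W *\<^sub>v (B *\<^sub>v x)" m "B *\<^sub>v x"] by auto
    finally show ?thesis using pos_def_matD(3)[OF pd _ Bx] B x by simp
  qed
  ultimately show ?thesis unfolding pos_def_mat_def using B W by auto
qed

lemma transpose_minv_pos_def:
  assumes "pos_def_mat n W"
  shows "transpose_mat (minv W) = minv W"
proof -
  note W = pos_def_matD(1,2)[OF assms] and Wi = pos_def_mat_minv[OF assms]
  have "W * transpose_mat (minv W) = 1\<^sub>m n" "transpose_mat (minv W) * W = 1\<^sub>m n"
    using arg_cong[OF Wi(3), of transpose_mat] arg_cong[OF Wi(2), of transpose_mat] W Wi(1)
    by (simp_all add: transpose_mult[of _ n n _ n])
  then show ?thesis using minv_eqI[OF W(1), of "transpose_mat (minv W)"] Wi(1) by simp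
qed

lemma pos_def_mat_minv_pos_def:
  assumes "pos_def_mat n W"
  shows "pos_def_mat n (minv W)"
proof -
  note W = pos_def_matD(1)[OF assms] and Wi = pos_def_mat_minv[OF assms]
  have "inj_mat (minv W)"
  proof (rule inj_matI[OF Wi(1)])
    fix x assume x: "x \<in> carrier_vec n" and "minv W *\<^sub>v x = 0\<^sub>v n"
    have "x = (W * minv W) *\<^sub>v x" using Wi x by simp
    also have "\<dots> = W *\<^sub>v 0\<^sub>v n"
      by (simp only: assoc_mult_mat_vec[OF W Wi(1) x] \<open>minv W *\<^sub>v x = 0\<^sub>v n\<close>)
    also have "\<dots> = 0\<^sub>v n" using W by (intro eq_vecI) auto
    finally show "x = 0\<^sub>v n" .
  qed
  then have "pos_def_mat n (transpose_mat (minv W) * W * minv W)"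
    by (rule pos_def_mat_congruence[OF assms Wi(1)])
  moreover have "transpose_mat (minv W) * W * minv W = minv W"
    using W Wi by (simp add: transpose_minv_pos_def[OF assms])
  ultimately show ?thesis by simp
qed

lemma minv_minv_pos_def:
  assumes "pos_def_mat n W"
  shows "minv (minv W) = W"
  by (rule minv_eqI) (use pos_def_mat_minv[OF assms] pos_def_matD(1)[OF assms] in auto)

lemma mtrace_add:
  "A \<in> carrier_mat n n \<Longrightarrow> B \<in> carrier_mat n n \<Longrightarrow> mtrace (A + B) = mtrace A + mtrace B"
  unfolding mtrace_def by (simp add: sum.distrib)

lemma mtrace_congruence:
  assumes E: "E \<in> carrier_mat n m" and W: "W \<in> carrier_mat m m"
  shows "mtrace (E * W * transpose_mat E) = (\<Sum>i<n. row E i \<bullet> (W *\<^sub>v row E i))"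
proof -
  have "(E * W * transpose_mat E) $$ (i, i) = row E i \<bullet> (W *\<^sub>v row E i)" if "i < n" for i
  proof -
    have "(E * W * transpose_mat E) $$ (i, i) = row E i \<bullet> col (W * transpose_mat E) i"
      using E W that by simp
    also have "col (W * transpose_mat E) i = W *\<^sub>v row E i"
      using E W that by (simp add: mult_mat_vec_def)
    finally show ?thesis .
  qed
  then show ?thesis unfolding mtrace_def using E by simp
qed

lemma mtrace_congruence_nonneg:
  assumes "pos_def_mat m W" and E: "E \<in> carrier_mat n m"
  shows "mtrace (E * W * transpose_mat E) \<ge> 0"
  unfolding mtrace_congruence[OF E pos_def_matD(1)[OF assms(1)]]
  by (intro sum_nonneg pos_def_mat_quadratic_nonneg[OF assms(1)]) (use E in auto)

lemma mtrace_congruence_eq_0: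
  assumes W: "pos_def_mat m W" and E: "E \<in> carrier_mat n m"
    and "mtrace (E * W * transpose_mat E) = 0"
  shows "E = 0\<^sub>m n m"
proof (rule eq_matI)
  have rows: "row E i \<in> carrier_vec m" for i using E by (auto intro: carrier_vecI)
  fix i j assume ij: "i < dim_row (0\<^sub>m n m :: real mat)" "j < dim_col (0\<^sub>m n m :: real mat)"
  have "\<forall>i\<in>{..<n}. row E i \<bullet> (W *\<^sub>v row E i) = 0"
    using assms(3) pos_def_mat_quadratic_nonneg[OF W rows]
    unfolding mtrace_congruence[OF E pos_def_matD(1)[OF W]]
    by (subst sum_nonneg_eq_0_iff[symmetric]) auto
  then have "row E i = 0\<^sub>v m"
    using pos_def_matD(3)[OF W rows] ij by fastforce
  moreover have "E $$ (i, j) = row E i $ j" using E ij by simp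
  ultimately show "E $$ (i, j) = 0\<^sub>m n m $$ (i, j)" using ij by simp
qed (use E in auto)

lemma congruence_add_orthogonal:
  fixes R E W :: "'a :: comm_semiring_0 mat"
  assumes R: "R \<in> carrier_mat n m" and E: "E \<in> carrier_mat n m"
    and W: "W \<in> carrier_mat m m" "transpose_mat W = W"
    and orth: "R * W * transpose_mat E = 0\<^sub>m n n"
  shows "(R + E) * W * transpose_mat (R + E)
    = R * W * transpose_mat R + E * W * transpose_mat E"
proof -
  have "transpose_mat (R * W) = W * transpose_mat R"
    using transpose_mult[OF R W(1)] W(2) by simp
  then have "transpose_mat (R * W * transpose_mat E) = E * W * transpose_mat R"
    using transpose_mult[of "R * W" n m "transpose_mat E" n] R E W by simp
  then have orth': "E * W * transpose_mat R = 0\<^sub>m n n" unfolding orth by simp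
  have "(R + E) * W * transpose_mat (R + E)
      = (R * W + E * W) * (transpose_mat R + transpose_mat E)"
    using R E W by (simp add: add_mult_distrib_mat[of R n m E W m] transpose_add[of R n m E])
  also have "\<dots> = (R * W * transpose_mat R + E * W * transpose_mat R)
      + (R * W * transpose_mat E + E * W * transpose_mat E)"
    using R E W
    by (simp add: mult_add_distrib_mat[of _ n m _ n] add_mult_distrib_mat[of _ n m _ _ n])
  also have "\<dots> = R * W * transpose_mat R + E * W * transpose_mat E"
    unfolding orth orth' using R E W by simp
  finally show ?thesis .
qed

lemma mse_trace_eq_mtrace_congruence:
  assumes "S \<in> carrier_mat n k" "G \<in> carrier_mat k m" "W \<in> carrier_mat m m"
  shows "mse_trace S W G = mtrace ((S * G) * W * transpose_mat (S * G))"
  unfolding mse_trace_def using assms by (simp add: transpose_mult[of S n k] mult_mat_assoc)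

subsection \<open>Generalized least squares\<close>

definition gls_mat :: "real mat \<Rightarrow> real mat \<Rightarrow> real mat" where
  "gls_mat W B = minv (transpose_mat B * minv W * B) * transpose_mat B * minv W"

context
  fixes W B :: "real mat" and m k :: nat
  assumes W: "pos_def_mat m W" and B: "B \<in> carrier_mat m k" and B_inj: "inj_mat B"
begin

lemma gls_normal_mat_minv:
  "minv (transpose_mat B * minv W * B) \<in> carrier_mat k k"
  "minv (transpose_mat B * minv W * B) * (transpose_mat B * minv W * B) = 1\<^sub>m k"
  by (rule pos_def_mat_minv[OF pos_def_mat_congruence[OF pos_def_mat_minv_pos_def[OF W] B B_inj]])+

lemma gls_mat_carrier: "gls_mat W B \<in> carrier_mat k m"
  unfolding gls_mat_def using gls_normal_mat_minv B pos_def_mat_minv[OF W] by auto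

lemma gls_mat_left_inverse: "gls_mat W B * B = 1\<^sub>m k"
  unfolding gls_mat_def using gls_normal_mat_minv B pos_def_mat_minv[OF W]
  by (simp add: mult_mat_assoc)

lemma gls_mat_orthogonal:
  assumes G: "G \<in> carrier_mat k m" and GB: "G * B = 1\<^sub>m k"
  shows "gls_mat W B * W * transpose_mat (G - gls_mat W B) = 0\<^sub>m k k"
proof -
  define P where "P = minv (transpose_mat B * minv W * B)"
  have P: "P \<in> carrier_mat k k" unfolding P_def by (rule gls_normal_mat_minv)
  note Wi = pos_def_mat_minv[OF W] and W_carrier = pos_def_matD(1)[OF W]
  have D: "G - gls_mat W B \<in> carrier_mat k m" by (rule minus_carrier_mat[OF gls_mat_carrier])
  have "(G - gls_mat W B) * B = 0\<^sub>m k k"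
    using G B gls_mat_carrier
    by (simp add: minus_mult_distrib_mat[of G k m] GB gls_mat_left_inverse)
  then have "transpose_mat B * transpose_mat (G - gls_mat W B) = 0\<^sub>m k k"
    using transpose_mult[OF D B] by simp
  moreover have "gls_mat W B * W = P * transpose_mat B"
    unfolding gls_mat_def P_def[symmetric] using P B Wi W_carrier by (simp add: mult_mat_assoc)
  ultimately show ?thesis
    using P B G gls_mat_carrier by (simp add: mult_mat_assoc)
qed

lemma mse_trace_gls_decomposition:
  assumes S: "S \<in> carrier_mat n k" and G: "G \<in> carrier_mat k m" and GB: "G * B = 1\<^sub>m k"
  defines "E \<equiv> S * (G - gls_mat W B)"
  shows "mse_trace S W G = mse_trace S W (gls_mat W B) + mtrace (E * W * transpose_mat E)"
proof -
  define G0 where "G0 = gls_mat W B"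
  note G0 = gls_mat_carrier[folded G0_def] and W' = pos_def_matD(1,2)[OF W]
  have D: "G - G0 \<in> carrier_mat k m" by (rule minus_carrier_mat[OF G0])
  have E_carrier: "E \<in> carrier_mat n m" unfolding E_def G0_def[symmetric] using S D by auto
  have "S * G = S * G0 + (S * G - S * G0)"
    using S G G0 by (intro eq_matI) auto
  then have SG: "S * G = S * G0 + E"
    unfolding E_def G0_def[symmetric] using S G G0 by (simp add: mult_minus_distrib_mat[of S n k])
  have "S * G0 * W * transpose_mat E = S * (G0 * W * transpose_mat (G - G0)) * transpose_mat S"
    unfolding E_def G0_def[symmetric] transpose_mult[OF S D]
    using S D G0 W' by (simp add: mult_mat_assoc)
  then have orth: "S * G0 * W * transpose_mat E = 0\<^sub>m n n"
    using gls_mat_orthogonal[OF G GB, folded G0_def] S by simp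
  show ?thesis
    unfolding mse_trace_eq_mtrace_congruence[OF S G W'(1)]
      mse_trace_eq_mtrace_congruence[OF S G0 W'(1)] SG G0_def[symmetric]
      congruence_add_orthogonal[OF mult_carrier_mat[OF S G0] E_carrier W' orth]
    using S G0 E_carrier W' by (intro mtrace_add) auto
qed

lemma mse_trace_gls_le:
  assumes "S \<in> carrier_mat n k" "G \<in> carrier_mat k m" "G * B = 1\<^sub>m k"
  shows "mse_trace S W (gls_mat W B) \<le> mse_trace S W G"
proof -
  have "S * (G - gls_mat W B) \<in> carrier_mat n m"
    using assms(1,2) gls_mat_carrier by auto
  then show ?thesis
    using mse_trace_gls_decomposition[OF assms] mtrace_congruence_nonneg[OF W] by simp
qed

lemma mse_trace_gls_unique:
  assumes S: "S \<in> carrier_mat n k" and "inj_mat S"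
    and G: "G \<in> carrier_mat k m" and GB: "G * B = 1\<^sub>m k"
    and eq: "mse_trace S W G = mse_trace S W (gls_mat W B)"
  shows "G = gls_mat W B"
proof -
  have D: "G - gls_mat W B \<in> carrier_mat k m" by (rule minus_carrier_mat[OF gls_mat_carrier])
  have "S * (G - gls_mat W B) = 0\<^sub>m n m"
    using mtrace_congruence_eq_0[OF W mult_carrier_mat[OF S D]]
      mse_trace_gls_decomposition[OF S G GB] eq by simp
  then have "G - gls_mat W B = 0\<^sub>m k m" by (rule inj_mat_mult_eq_0[OF S \<open>inj_mat S\<close> D])
  moreover have "G = gls_mat W B + (G - gls_mat W B)"
    using G gls_mat_carrier by (intro eq_matI) auto
  ultimately show ?thesis using gls_mat_carrier by simp
qed

end

subsection \<open>Structural and selection matrices\<close>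

lemma append_rows_mult_vec_eq_0_iff:
  assumes A: "A \<in> carrier_mat nr1 nc" and B: "B \<in> carrier_mat nr2 nc" and v: "v \<in> carrier_vec nc"
  shows "(A @\<^sub>r B) *\<^sub>v v = 0\<^sub>v (nr1 + nr2) \<longleftrightarrow> A *\<^sub>v v = 0\<^sub>v nr1 \<and> B *\<^sub>v v = 0\<^sub>v nr2"
proof -
  have "0\<^sub>v (nr1 + nr2) = 0\<^sub>v nr1 @\<^sub>v (0\<^sub>v nr2 :: 'a vec)" by auto
  then show ?thesis
    unfolding mat_mult_append[OF A B v] using append_vec_eq[of "A *\<^sub>v v" nr1] A v by simp
qed

lemma struct_mat_carrier:
  "A \<in> carrier_mat nu nb \<Longrightarrow> struct_mat nu nb A \<in> carrier_mat (nu + nb) nb"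
  unfolding struct_mat_def by auto

lemma inj_mat_struct_mat:
  assumes A: "A \<in> carrier_mat nu nb"
  shows "inj_mat (struct_mat nu nb A)"
  by (rule inj_matI[OF struct_mat_carrier[OF A]])
    (use append_rows_mult_vec_eq_0_iff[OF A one_carrier_mat] in \<open>auto simp: struct_mat_def\<close>)

lemma stack_mats_carrier:
  "\<forall>L \<in> set Ls. L \<in> carrier_mat (dim_row L) n \<Longrightarrow>
   stack_mats n Ls \<in> carrier_mat (\<Sum>L\<leftarrow>Ls. dim_row L) n"
  by (induction Ls) auto

lemma stack_mats_mult_vec_eq_0D:
  assumes "\<forall>L \<in> set Ls. L \<in> carrier_mat (dim_row L) n" and x: "x \<in> carrier_vec n"
    and "stack_mats n Ls *\<^sub>v x = 0\<^sub>v (\<Sum>L\<leftarrow>Ls. dim_row L)" and "L \<in> set Ls"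
  shows "L *\<^sub>v x = 0\<^sub>v (dim_row L)"
  using assms
proof (induction Ls)
  case (Cons L' Ls)
  then show ?case
    using append_rows_mult_vec_eq_0_iff[of L' "dim_row L'" n "stack_mats n Ls", OF _ stack_mats_carrier x]
    by auto
qed simp

lemma selection_mat_mult_vec:
  assumes "selection_mat nj n L" and i: "i < nj" and k: "k < n" and "L $$ (i, k) = 1"
    and x: "x \<in> carrier_vec n"
  shows "(L *\<^sub>v x) $ i = x $ k"
proof -
  obtain f where L: "L \<in> carrier_mat nj n"
    and f: "\<forall>i<nj. \<forall>k<n. L $$ (i, k) = (if k = f i then 1 else 0)"
    using assms(1) unfolding selection_mat_def by blast
  then have "f i = k" using assms(4) i k by (metis zero_neq_one)
  then have "row L i = unit_vec n k" using L f i k by (intro eq_vecI) auto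
  then show ?thesis using L i k x by simp
qed

lemma inj_mat_stack_selection:
  assumes sel: "\<forall>L \<in> set Ls. selection_mat (dim_row L) n L"
    and cover: "\<forall>k<n. \<exists>L \<in> set Ls. \<exists>i<dim_row L. L $$ (i, k) = 1"
  shows "inj_mat (stack_mats n Ls)"
proof -
  have carriers: "\<forall>L \<in> set Ls. L \<in> carrier_mat (dim_row L) n"
    using sel unfolding selection_mat_def by blast
  show ?thesis
  proof (rule inj_matI[OF stack_mats_carrier[OF carriers]])
    fix x assume x: "x \<in> carrier_vec n" and "stack_mats n Ls *\<^sub>v x = 0\<^sub>v (\<Sum>L\<leftarrow>Ls. dim_row L)"
    then have zero: "L *\<^sub>v x = 0\<^sub>v (dim_row L)" if "L \<in> set Ls" for L
      using stack_mats_mult_vec_eq_0D[OF carriers] that by blast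
    show "x = 0\<^sub>v n"
    proof (rule eq_vecI)
      fix k assume "k < dim_vec (0\<^sub>v n :: real vec)"
      then obtain L i where "L \<in> set Ls" "i < dim_row L" "k < n" "L $$ (i, k) = 1"
        using cover by auto
      then have "x $ k = (L *\<^sub>v x) $ i" using selection_mat_mult_vec sel x by metis
      then show "x $ k = 0\<^sub>v n $ k" using zero \<open>L \<in> set Ls\<close> \<open>i < dim_row L\<close> \<open>k < n\<close> by simp
    qed (use x in simp)
  qed
qed

theorem theorem2:
  fixes nu nb n :: nat and A :: "real mat" and Ls :: "real mat list"
    and W :: "real mat"
  defines "S \<equiv> struct_mat nu nb A"
    and "K \<equiv> stack_mats n Ls"
    and "m \<equiv> (\<Sum>L\<leftarrow>Ls. dim_row L)"
  defines "Wc \<equiv> minv (transpose_mat K * minv W * K)"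
  defines "G0 \<equiv> minv (transpose_mat S * minv Wc * S) * transpose_mat S * transpose_mat K * minv W"
  assumes nu_lt: "nu < n" and nb_def: "nb = n - nu"
    and A_dim: "A \<in> carrier_mat nu nb"
    and p_ge: "length Ls \<ge> 2"
    and sel: "\<forall>L \<in> set Ls. selection_mat (dim_row L) n L"
    and cover: "\<forall>k<n. \<exists>L \<in> set Ls. \<exists>i<dim_row L. L $$ (i, k) = 1"
    and W_pd: "pos_def_mat m W"
  shows "G0 \<in> carrier_mat nb m \<and> G0 * K * S = 1\<^sub>m nb \<and>
         (\<forall>G \<in> carrier_mat nb m. G * K * S = 1\<^sub>m nb \<longrightarrow>
             mse_trace S W G0 \<le> mse_trace S W G \<and>
             (mse_trace S W G = mse_trace S W G0 \<longrightarrow> G = G0))"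
proof -
  have S: "S \<in> carrier_mat n nb" "inj_mat S"
    using struct_mat_carrier[OF A_dim] inj_mat_struct_mat[OF A_dim] nu_lt nb_def
    unfolding S_def by auto
  have "\<forall>L \<in> set Ls. L \<in> carrier_mat (dim_row L) n"
    using sel unfolding selection_mat_def by blast
  then have K: "K \<in> carrier_mat m n" "inj_mat K"
    using stack_mats_carrier inj_mat_stack_selection[OF sel cover] unfolding K_def m_def by auto
  have KS: "K * S \<in> carrier_mat m nb" "inj_mat (K * S)"
    using inj_mat_mult[OF K(1) S(1) K(2) S(2)] K S by auto
  have "minv Wc = transpose_mat K * minv W * K"
    unfolding Wc_def
    by (rule minv_minv_pos_def[OF pos_def_mat_congruence[OF pos_def_mat_minv_pos_def[OF W_pd] K]])
  then have "transpose_mat S * minv Wc * S = transpose_mat (K * S) * minv W * (K * S)"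
    using K S pos_def_mat_minv(1)[OF W_pd] by (simp add: transpose_mult[OF K(1) S(1)] mult_mat_assoc)
  then have G0: "G0 = gls_mat W (K * S)"
    unfolding G0_def gls_mat_def
    using K S pos_def_mat_minv(1)[OF W_pd] gls_normal_mat_minv(1)[OF W_pd KS]
    by (simp add: transpose_mult[OF K(1) S(1)] mult_mat_assoc)
  show ?thesis
    unfolding G0
    using gls_mat_carrier[OF W_pd KS] gls_mat_left_inverse[OF W_pd KS]
      mse_trace_gls_le[OF W_pd KS S(1)] mse_trace_gls_unique[OF W_pd KS S] K S
    by (auto simp: mult_mat_assoc)
qed

end
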